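(* Let $\mathcal{A}=(Q,\Sigma,t,o)$ be an expanding automaton. There is an algorithm which, given $q\in Q$, decides whether the map $q:\Sigma^*\to\Sigma^*$ is injective.
   Context: An expanding automaton is a quadruple $\mathcal{A}=(Q,\Sigma,t,o)$ with $Q$ a finite set of states, $\Sigma$ a finite alphabet, $t:Q\times\Sigma\to Q$ and $o:Q\times\Sigma\to\Sigma^+$. Each state $q$ induces $q:\Sigma^*\to\Sigma^*$ by $q(\emptyset)=\emptyset$ and $q(\sigma w)=o(q,\sigma)\,q'(w)$ with $q'=t(q,\sigma)$. *)

theory Defs
  imports Main "HOL-Library.Nat_Bijection"
begin

datatype recf =
    Zero
  | Succ
  | Proj nat
  | Comp recf "recf list"
  | Prim recf recf
  | Mn recf

inductive eval :: "recf \<Rightarrow> nat list \<Rightarrow> nat \<Rightarrow> bool" where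
  eval_Zero: "eval Zero xs 0"
| eval_Succ: "eval Succ (x # xs) (Suc x)"
| eval_Proj: "i < length xs \<Longrightarrow> eval (Proj i) xs (xs ! i)"
| eval_Comp: "list_all2 (\<lambda>g y. eval g xs y) gs ys \<Longrightarrow> eval f ys z \<Longrightarrow> eval (Comp f gs) xs z"
| eval_Prim0: "eval f xs z \<Longrightarrow> eval (Prim f g) (0 # xs) z"
| eval_PrimS: "eval (Prim f g) (n # xs) y \<Longrightarrow> eval g (y # n # xs) z
                 \<Longrightarrow> eval (Prim f g) (Suc n # xs) z"
| eval_Mn: "eval f (n # xs) 0 \<Longrightarrow> (\<forall>m<n. \<exists>k. k \<noteq> 0 \<and> eval f (m # xs) k)
             \<Longrightarrow> eval (Mn f) xs n"
monos list_all2_mono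

text \<open>States are 0..<nQ, letters are 0..<nS.  The transition function is the
  table tt (t(q,a) = tt!q!a) and the output function is the table oo
  (o(q,a) = oo!q!a, a nonempty word).\<close>

datatype automaton = Aut (nQ: nat) (nS: nat) (ttab: "nat list list") (otab: "nat list list list")

definition expanding_automaton :: "automaton \<Rightarrow> bool" where
  "expanding_automaton A \<longleftrightarrow>
     length (ttab A) = nQ A \<and> length (otab A) = nQ A \<and>
     (\<forall>q < nQ A. length (ttab A ! q) = nS A \<and> length (otab A ! q) = nS A \<and>
        (\<forall>a < nS A. ttab A ! q ! a < nQ A \<and> otab A ! q ! a \<noteq> [] \<and>
                    set (otab A ! q ! a) \<subseteq> {..<nS A}))"

fun state_map :: "automaton \<Rightarrow> nat \<Rightarrow> nat list \<Rightarrow> nat list" where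
  "state_map A q [] = []"
| "state_map A q (a # w) = otab A ! q ! a @ state_map A (ttab A ! q ! a) w"

definition encode_instance :: "automaton \<Rightarrow> nat \<Rightarrow> nat" where
  "encode_instance A q = list_encode
     [nQ A, nS A,
      list_encode (map list_encode (ttab A)),
      list_encode (map (\<lambda>row. list_encode (map list_encode row)) (otab A)),
      q]"

end

theory Submission
  imports Defs "HOL-Library.Sublist"
begin

(* The program is a bounded search. The code N of the instance bounds the number of states, the
   alphabet size and the length of every output. If q has a collision u ~= v, q(u) = q(v), then it
   has one with |u|, |v| <= 2N + (N^2 (N+1))^2 (short_collision_exists): a longer collision is
   shortened either by removing a loop of the automaton from the common prefix of u and v, or,
   beyond the first differing letter, by excising from both words the input that produces the
   output between two positions at which both runs are in the same configuration (state, letter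
   read, offset into its output), of which there are at most N^2 (N+1). *)

section \<open>Computability by mu-recursive programs\<close>

definition computes :: "nat \<Rightarrow> recf \<Rightarrow> (nat list \<Rightarrow> nat) \<Rightarrow> bool" where
  "computes n p f \<longleftrightarrow> (\<forall>xs. length xs = n \<longrightarrow> eval p xs (f xs))"

definition computable :: "nat \<Rightarrow> (nat list \<Rightarrow> nat) \<Rightarrow> bool" where
  "computable n f \<longleftrightarrow> (\<exists>p. computes n p f)"

definition decidable :: "nat \<Rightarrow> (nat list \<Rightarrow> bool) \<Rightarrow> bool" where
  "decidable n P \<longleftrightarrow> computable n (\<lambda>xs. if P xs then 1 else 0)"

lemma computable_cong:
  assumes "computable n f" and "\<And>xs. length xs = n \<Longrightarrow> f xs = g xs"
  shows "computable n g"
  using assms unfolding computable_def computes_def by metis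

lemma computable_zero: "computable n (\<lambda>xs. 0)"
  unfolding computable_def computes_def by (blast intro: eval_Zero)

lemma computable_proj: "i < n \<Longrightarrow> computable n (\<lambda>xs. xs ! i)"
  unfolding computable_def computes_def by (blast intro: eval_Proj)

lemma computable_Suc:
  assumes "computable n f" shows "computable n (\<lambda>xs. Suc (f xs))"
proof -
  obtain p where p: "computes n p f" using assms unfolding computable_def by blast
  have "eval (Comp Succ [p]) xs (Suc (f xs))" if "length xs = n" for xs
  proof (rule eval_Comp)
    show "list_all2 (\<lambda>g y. eval g xs y) [p] [f xs]" using p that by (simp add: computes_def)
  qed (rule eval_Succ)
  then show ?thesis unfolding computable_def computes_def by blast
qed

lemma computable_const: "computable n (\<lambda>xs. c)"
  by (induction c) (auto intro: computable_zero computable_Suc)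

lemma computable_programs:
  assumes "\<forall>g\<in>set gs. computable n g"
  obtains ps where "list_all2 (\<lambda>p g. computes n p g) ps gs"
  using assms
proof (induction gs arbitrary: thesis)
  case Nil then show ?case by auto
next
  case (Cons g gs)
  obtain ps where "list_all2 (\<lambda>p g. computes n p g) ps gs" using Cons by auto
  moreover obtain p where "computes n p g" using Cons.prems(2) computable_def by auto
  ultimately show ?case using Cons.prems(1)[of "p # ps"] by auto
qed

lemma computable_comp:
  assumes F: "computable (length gs) F" and gs: "\<forall>g\<in>set gs. computable n g"
  shows "computable n (\<lambda>xs. F (map (\<lambda>g. g xs) gs))"
proof -
  obtain pF where pF: "computes (length gs) pF F" using F computable_def by auto
  obtain ps where ps: "list_all2 (\<lambda>p g. computes n p g) ps gs" using computable_programs[OF gs] .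
  have "eval (Comp pF ps) xs (F (map (\<lambda>g. g xs) gs))" if "length xs = n" for xs
  proof (rule eval_Comp)
    show "list_all2 (\<lambda>g y. eval g xs y) ps (map (\<lambda>g. g xs) gs)"
      using ps that by (auto simp: list_all2_conv_all_nth computes_def)
    show "eval pF (map (\<lambda>g. g xs) gs) (F (map (\<lambda>g. g xs) gs))"
      using pF by (simp add: computes_def)
  qed
  then show ?thesis unfolding computable_def computes_def by blast
qed

lemma computes_Prim:
  assumes b: "computes n pb b" and s: "computes (Suc (Suc n)) ps s"
  shows "computes (Suc n) (Prim pb ps) (\<lambda>ys. rec_nat (b (tl ys)) (\<lambda>k r. s (r # k # tl ys)) (hd ys))"
  unfolding computes_def
proof (intro allI impI)
  fix ys :: "nat list" assume "length ys = Suc n"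
  then obtain x xs where ys: "ys = x # xs" and len: "length xs = n" by (cases ys) auto
  have "eval (Prim pb ps) (x # xs) (rec_nat (b xs) (\<lambda>k r. s (r # k # xs)) x)"
  proof (induction x)
    case 0 then show ?case using b len unfolding computes_def by (auto intro: eval_Prim0)
  next
    case (Suc x) then show ?case using s len unfolding computes_def by (auto intro: eval_PrimS)
  qed
  then show "eval (Prim pb ps) ys (rec_nat (b (tl ys)) (\<lambda>k r. s (r # k # tl ys)) (hd ys))"
    using ys by simp
qed

lemma computable_rec_nat:
  assumes b: "computable n b" and s: "computable (Suc (Suc n)) s" and f: "computable n f"
  shows "computable n (\<lambda>xs. rec_nat (b xs) (\<lambda>k r. s (r # k # xs)) (f xs))"
proof -
  obtain pb ps where "computes n pb b" "computes (Suc (Suc n)) ps s"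
    using b s computable_def by auto
  then have R: "computable (Suc n) (\<lambda>ys. rec_nat (b (tl ys)) (\<lambda>k r. s (r # k # tl ys)) (hd ys))"
    using computes_Prim computable_def by blast
  let ?gs = "f # map (\<lambda>i xs. xs ! i) [0..<n]"
  have args: "map ((!) xs) [0..<n] = xs" if "length xs = n" for xs
    using that map_nth[of xs] by simp
  have "computable n (\<lambda>xs. (\<lambda>ys. rec_nat (b (tl ys)) (\<lambda>k r. s (r # k # tl ys)) (hd ys))
          (map (\<lambda>g. g xs) ?gs))"
    by (rule computable_comp) (use R f computable_proj in auto)
  then show ?thesis by (rule computable_cong) (simp add: comp_def args)
qed

(* Arguments may be selected and permuted. The two instances below let a primitive recursion
   step ignore the recursion value and the counter, or only the recursion value. *)
lemma computable_reindex:
  assumes F: "computable m F" and idx: "\<forall>i<m. idx i < n"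
  shows "computable n (\<lambda>ys. F (map (\<lambda>i. ys ! idx i) [0..<m]))"
proof -
  have "computable n (\<lambda>ys. F (map (\<lambda>g. g ys) (map (\<lambda>i ys. ys ! idx i) [0..<m])))"
    by (rule computable_comp) (use F idx computable_proj in auto)
  then show ?thesis by (simp add: comp_def)
qed

lemma computable_drop2:
  assumes "computable n g" shows "computable (Suc (Suc n)) (\<lambda>ys. g (drop 2 ys))"
proof -
  have "computable (Suc (Suc n)) (\<lambda>ys. g (map (\<lambda>i. ys ! (i + 2)) [0..<n]))"
    by (rule computable_reindex) (use assms in auto)
  then show ?thesis
    by (rule computable_cong) (auto intro!: arg_cong[where f=g] nth_equalityI)
qed

lemma computable_drop_second:
  assumes "computable (Suc n) g" shows "computable (Suc (Suc n)) (\<lambda>ys. g (ys ! 1 # drop 2 ys))"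
proof -
  have "computable (Suc (Suc n))
          (\<lambda>ys. g (map (\<lambda>i. ys ! (if i = 0 then 1 else i + 1)) [0..<Suc n]))"
    by (rule computable_reindex) (use assms in auto)
  then show ?thesis
    by (rule computable_cong)
      (auto intro!: arg_cong[where f=g] nth_equalityI simp: nth_Cons' simp del: upt_Suc)
qed

lemma computable_add:
  assumes f: "computable n f" and g: "computable n g"
  shows "computable n (\<lambda>xs. f xs + g xs)"
proof -
  have "computable n (\<lambda>xs. rec_nat (g xs) (\<lambda>k r. (\<lambda>ys. Suc (ys ! 0)) (r # k # xs)) (f xs))"
    by (rule computable_rec_nat) (use f g computable_Suc computable_proj in auto)
  moreover have "rec_nat y (\<lambda>k r. Suc r) x = x + y" for x y :: nat by (induction x) auto
  ultimately show ?thesis by simp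
qed

lemma computable_diff:
  assumes f: "computable n f" and g: "computable n g"
  shows "computable n (\<lambda>xs. f xs - g xs)"
proof -
  have pred: "computable (Suc (Suc n)) (\<lambda>ys. rec_nat 0 (\<lambda>k r. (\<lambda>zs. zs ! 1) (r # k # ys)) (ys ! 0))"
    by (rule computable_rec_nat) (auto intro: computable_const computable_proj)
  have "computable n (\<lambda>xs. rec_nat (f xs)
          (\<lambda>k r. (\<lambda>ys. rec_nat 0 (\<lambda>k r. (\<lambda>zs. zs ! 1) (r # k # ys)) (ys ! 0)) (r # k # xs)) (g xs))"
    by (rule computable_rec_nat) (use f g pred in auto)
  moreover have "rec_nat 0 (\<lambda>k r. k) x = x - 1" for x :: nat by (cases x) auto
  moreover have "rec_nat y (\<lambda>k r. r - 1) x = y - x" for x y :: nat by (induction x) auto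
  ultimately show ?thesis by simp
qed

lemma computable_mult:
  assumes f: "computable n f" and g: "computable n g"
  shows "computable n (\<lambda>xs. f xs * g xs)"
proof -
  have "computable n (\<lambda>xs. rec_nat 0 (\<lambda>k r. (\<lambda>ys. ys ! 0 + g (drop 2 ys)) (r # k # xs)) (f xs))"
    by (rule computable_rec_nat)
      (use f g in \<open>auto intro!: computable_const computable_add computable_proj computable_drop2\<close>)
  moreover have "rec_nat 0 (\<lambda>k r. r + y) x = x * y" for x y :: nat by (induction x) auto
  ultimately show ?thesis by simp
qed

lemma computable_if_zero:
  assumes f: "computable n f" and g: "computable n g" and h: "computable n h"
  shows "computable n (\<lambda>xs. if f xs = 0 then g xs else h xs)"
proof -
  have "computable n (\<lambda>xs. rec_nat (g xs) (\<lambda>k r. (\<lambda>ys. h (drop 2 ys)) (r # k # xs)) (f xs))"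
    by (rule computable_rec_nat) (use f g h in \<open>auto intro!: computable_drop2\<close>)
  moreover have "rec_nat y (\<lambda>k r. z) x = (if x = 0 then y else z)" for x y z :: nat
    by (cases x) auto
  ultimately show ?thesis by simp
qed

lemma computable_if:
  assumes P: "decidable n P" and f: "computable n f" and g: "computable n g"
  shows "computable n (\<lambda>xs. if P xs then f xs else g xs)"
proof -
  have "computable n (\<lambda>xs. if (if P xs then 1 else 0::nat) = 0 then g xs else f xs)"
    using computable_if_zero[OF P[unfolded decidable_def] g f] .
  then show ?thesis by (rule computable_cong) auto
qed

lemma decidable_eq:
  assumes "computable n f" and "computable n g" shows "decidable n (\<lambda>xs. f xs = g xs)"
proof -
  have "computable n (\<lambda>xs. if (f xs - g xs) + (g xs - f xs) = 0 then 1 else 0)"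
    using assms by (intro computable_if_zero computable_add computable_diff computable_const)
  then show ?thesis unfolding decidable_def by (rule computable_cong) auto
qed

lemma decidable_le:
  assumes "computable n f" and "computable n g" shows "decidable n (\<lambda>xs. f xs \<le> g xs)"
proof -
  have "computable n (\<lambda>xs. if f xs - g xs = 0 then 1 else 0)"
    using assms by (intro computable_if_zero computable_diff computable_const)
  then show ?thesis unfolding decidable_def by (rule computable_cong) auto
qed

lemma decidable_less:
  assumes "computable n f" and "computable n g" shows "decidable n (\<lambda>xs. f xs < g xs)"
proof -
  have "computable n (\<lambda>xs. if g xs - f xs = 0 then 0 else 1)"
    using assms by (intro computable_if_zero computable_diff computable_const)
  then show ?thesis unfolding decidable_def by (rule computable_cong) auto
qed

lemma decidable_not:
  assumes "decidable n P" shows "decidable n (\<lambda>xs. \<not> P xs)"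
  using computable_if[OF assms computable_const computable_const, of 0 1]
  unfolding decidable_def by (rule computable_cong) auto

lemma decidable_conj:
  assumes "decidable n P" and "decidable n Q" shows "decidable n (\<lambda>xs. P xs \<and> Q xs)"
  using computable_if[OF assms(1) assms(2)[unfolded decidable_def] computable_const, of 0]
  unfolding decidable_def by (rule computable_cong) auto

lemma computable_sum_less:
  assumes g: "computable (Suc n) g" and f: "computable n f"
  shows "computable n (\<lambda>xs. \<Sum>i<f xs. g (i # xs))"
proof -
  have "computable n (\<lambda>xs. rec_nat 0 (\<lambda>k r. (\<lambda>ys. ys ! 0 + g (ys ! 1 # drop 2 ys)) (r # k # xs)) (f xs))"
    by (rule computable_rec_nat[OF computable_const
          computable_add[OF computable_proj computable_drop_second[OF g]] f]) simp
  moreover have "rec_nat 0 (\<lambda>k r. r + g (k # xs)) x = (\<Sum>i<x. g (i # xs))" for x xs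
    by (induction x) auto
  ultimately show ?thesis by simp
qed

lemma decidable_bounded_ex:
  assumes P: "decidable (Suc n) P" and f: "computable n f"
  shows "decidable n (\<lambda>xs. \<exists>i<f xs. P (i # xs))"
proof -
  have "computable n (\<lambda>xs. \<Sum>i<f xs. (\<lambda>ys. if P ys then 1 else 0) (i # xs))"
    using P f computable_sum_less unfolding decidable_def by blast
  then have "decidable n (\<lambda>xs. (0::nat) < (\<Sum>i<f xs. if P (i # xs) then 1 else 0))"
    by (intro decidable_less computable_const) simp
  moreover have "(0 < (\<Sum>i<x. if P (i # xs) then 1 else 0::nat)) \<longleftrightarrow> (\<exists>i<x. P (i # xs))" for x xs
    by (simp only: neq0_conv[symmetric] sum_eq_0_iff[OF finite_lessThan]) auto
  ultimately show ?thesis by simp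
qed

lemma computable_lift1:
  assumes "computable 1 (\<lambda>ys. F (ys ! 0))" and "computable n f"
  shows "computable n (\<lambda>xs. F (f xs))"
  using computable_comp[of "[f]" "\<lambda>ys. F (ys ! 0)" n] assms by simp

lemma computable_lift2:
  assumes "computable 2 (\<lambda>ys. F (ys ! 0) (ys ! 1))" and "computable n f" and "computable n g"
  shows "computable n (\<lambda>xs. F (f xs) (g xs))"
  using computable_comp[of "[f, g]" "\<lambda>ys. F (ys ! 0) (ys ! 1)" n] assms
  by (simp add: numeral_2_eq_2)

lemma computable_lift4:
  assumes "computable 4 (\<lambda>ys. F (ys ! 0) (ys ! 1) (ys ! 2) (ys ! 3))"
    and "computable n f" and "computable n g" and "computable n h" and "computable n i"
  shows "computable n (\<lambda>xs. F (f xs) (g xs) (h xs) (i xs))"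
  using computable_comp[of "[f, g, h, i]" "\<lambda>ys. F (ys ! 0) (ys ! 1) (ys ! 2) (ys ! 3)" n] assms
  by (simp add: eval_nat_numeral)

lemmas computable_intros =
  computable_const computable_proj computable_Suc computable_add computable_diff computable_mult
  computable_if decidable_eq decidable_le decidable_less decidable_not decidable_conj

section \<open>Primitive recursive decoding of pairs and lists\<close>

(* The library's Cantor pairing prod_encode (x, y) = triangle (x + y) + x is computable. *)
lemma triangle_rec_nat: "triangle x = rec_nat 0 (\<lambda>k r. r + Suc k) x"
  by (induction x) auto

lemma triangle_mono: "a \<le> b \<Longrightarrow> triangle a \<le> triangle b"
  by (induction b) (auto simp: le_Suc_eq)

lemma triangle_ge: "k \<le> triangle k"
  by (induction k) auto

lemma computable_triangle:
  assumes "computable n f" shows "computable n (\<lambda>xs. triangle (f xs))"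
proof (rule computable_lift1[OF _ assms])
  have "computable 1 (\<lambda>ys. rec_nat 0 (\<lambda>k r. (\<lambda>zs. zs ! 0 + Suc (zs ! 1)) (r # k # ys)) (ys ! 0))"
    by (rule computable_rec_nat) (auto intro!: computable_intros)
  then show "computable 1 (\<lambda>ys. triangle (ys ! 0))"
    by (rule computable_cong) (simp add: triangle_rec_nat)
qed

lemma computable_prod_encode:
  assumes "computable n f" and "computable n g"
  shows "computable n (\<lambda>xs. prod_encode (f xs, g xs))"
  unfolding prod_encode_def using assms by (auto intro!: computable_intros computable_triangle)

(* Decoding: tri_root z is the largest k with triangle k <= z, computed as a bounded count;
   unpair_fst and unpair_snd recover the components. *)
definition tri_root :: "nat \<Rightarrow> nat" where
  "tri_root z = (\<Sum>i<z. if triangle (Suc i) \<le> z then 1 else 0)"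

definition unpair_fst :: "nat \<Rightarrow> nat" where
  "unpair_fst z = z - triangle (tri_root z)"

definition unpair_snd :: "nat \<Rightarrow> nat" where
  "unpair_snd z = tri_root z - unpair_fst z"

lemma sum_indicator_less: "(\<Sum>i<z. if i < k then 1 else 0::nat) = min z k"
  by (induction z) auto

lemma prod_decode_unpair: "prod_decode z = (unpair_fst z, unpair_snd z)"
proof -
  obtain m n where d: "prod_decode z = (m, n)" by fastforce
  then have z: "z = triangle (m + n) + m"
    using prod_decode_inverse[of z] by (simp add: prod_encode_def)
  have below: "triangle (Suc i) \<le> z \<longleftrightarrow> i < m + n" for i
  proof
    assume "triangle (Suc i) \<le> z"
    then show "i < m + n"
      using triangle_mono[of "Suc (m + n)" "Suc i"] z by (cases "i < m + n") auto
  next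
    assume "i < m + n"
    then show "triangle (Suc i) \<le> z" using triangle_mono[of "Suc i" "m + n"] z by simp
  qed
  have "m + n \<le> z" using triangle_ge[of "m + n"] z by simp
  then have "tri_root z = m + n"
    unfolding tri_root_def below sum_indicator_less using z by simp
  then show ?thesis using d z by (simp add: unpair_fst_def unpair_snd_def)
qed

lemma computable_tri_root:
  assumes "computable n f" shows "computable n (\<lambda>xs. tri_root (f xs))"
proof (rule computable_lift1[OF _ assms])
  have "computable (Suc 1) (\<lambda>zs. if triangle (Suc (zs ! 0)) \<le> zs ! 1 then 1 else 0)"
    by (auto intro!: computable_intros computable_triangle)
  from computable_sum_less[OF this computable_proj[of 0 1, OF zero_less_one]]
  show "computable 1 (\<lambda>ys. tri_root (ys ! 0))"
    by (rule computable_cong) (simp add: tri_root_def)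
qed

lemma computable_unpair_fst:
  "computable n f \<Longrightarrow> computable n (\<lambda>xs. unpair_fst (f xs))"
  unfolding unpair_fst_def by (auto intro!: computable_intros computable_triangle computable_tri_root)

lemma computable_unpair_snd:
  "computable n f \<Longrightarrow> computable n (\<lambda>xs. unpair_snd (f xs))"
  unfolding unpair_snd_def by (auto intro!: computable_intros computable_tri_root computable_unpair_fst)

(* Operations on codes of lists, mirroring list_encode (x # xs) = Suc (prod_encode (x,
   list_encode xs)). They are defined for all numbers and are correct on codes of lists. *)
definition code_Cons :: "nat \<Rightarrow> nat \<Rightarrow> nat" where
  "code_Cons x c = Suc (prod_encode (x, c))"

definition code_hd :: "nat \<Rightarrow> nat" where
  "code_hd c = unpair_fst (c - 1)"

definition code_tl :: "nat \<Rightarrow> nat" where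
  "code_tl c = unpair_snd (c - 1)"

definition code_drop :: "nat \<Rightarrow> nat \<Rightarrow> nat" where
  "code_drop c i = rec_nat c (\<lambda>k r. code_tl r) i"

definition code_nth :: "nat \<Rightarrow> nat \<Rightarrow> nat" where
  "code_nth c i = code_hd (code_drop c i)"

definition code_length :: "nat \<Rightarrow> nat" where
  "code_length c = (\<Sum>i<c. if code_drop c i = 0 then 0 else 1)"

definition code_append :: "nat \<Rightarrow> nat \<Rightarrow> nat" where
  "code_append c d = rec_nat d (\<lambda>k r. code_Cons (code_nth c (code_length c - Suc k)) r) (code_length c)"

lemma code_Cons_list_encode: "code_Cons x (list_encode ys) = list_encode (x # ys)"
  by (simp add: code_Cons_def)

lemma code_tl_list_encode: "code_tl (list_encode ys) = list_encode (tl ys)"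
proof (cases ys)
  case Nil
  have "prod_decode 0 = (0, 0)" using prod_encode_inverse[of "(0, 0)"] by (simp add: prod_encode_def)
  then show ?thesis using Nil prod_decode_unpair[of 0] by (simp add: code_tl_def)
next
  case (Cons x xs)
  then show ?thesis
    using prod_decode_unpair[of "prod_encode (x, list_encode xs)"] by (simp add: code_tl_def)
qed

lemma code_drop_list_encode: "code_drop (list_encode xs) i = list_encode (drop i xs)"
  by (induction i) (auto simp: code_drop_def code_tl_list_encode drop_Suc tl_drop)

lemma code_nth_list_encode: "i < length xs \<Longrightarrow> code_nth (list_encode xs) i = xs ! i"
  using prod_decode_unpair[of "prod_encode (xs ! i, list_encode (drop (Suc i) xs))"]
  by (simp add: code_nth_def code_hd_def code_drop_list_encode Cons_nth_drop_Suc[symmetric])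

(* A code bounds the length of the list, so code_length may search below the code. *)
lemma length_le_list_encode: "length xs \<le> list_encode xs"
  by (induction xs) (auto simp: le_imp_less_Suc intro: order.trans[OF _ le_prod_encode_2])

lemma code_length_list_encode: "code_length (list_encode xs) = length xs"
proof -
  have "list_encode ys = 0 \<longleftrightarrow> ys = []" for ys by (cases ys) auto
  then have "code_length (list_encode xs) = (\<Sum>i<list_encode xs. if i < length xs then 1 else 0)"
    unfolding code_length_def code_drop_list_encode by (intro sum.cong) auto
  then show ?thesis using length_le_list_encode[of xs] sum_indicator_less by simp
qed

lemma code_append_list_encode:
  "code_append (list_encode xs) (list_encode ys) = list_encode (xs @ ys)"
proof -
  let ?R = "\<lambda>k. rec_nat (list_encode ys)
              (\<lambda>k r. code_Cons (code_nth (list_encode xs) (length xs - Suc k)) r) k"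
  have "?R k = list_encode (drop (length xs - k) xs @ ys)" if "k \<le> length xs" for k
    using that
  proof (induction k)
    case 0 then show ?case by simp
  next
    case (Suc k)
    have j: "length xs - Suc k < length xs" "Suc (length xs - Suc k) = length xs - k"
      using Suc.prems by auto
    have "drop (length xs - Suc k) xs = xs ! (length xs - Suc k) # drop (length xs - k) xs"
      using Cons_nth_drop_Suc[OF j(1), symmetric] j(2) by simp
    then show ?case using Suc by (simp add: code_Cons_list_encode code_nth_list_encode)
  qed
  then show ?thesis unfolding code_append_def code_length_list_encode by simp
qed

lemma computable_code_Cons:
  "computable n f \<Longrightarrow> computable n g \<Longrightarrow> computable n (\<lambda>xs. code_Cons (f xs) (g xs))"
  unfolding code_Cons_def by (auto intro!: computable_intros computable_prod_encode)

lemma computable_code_drop: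
  assumes "computable n f" and "computable n g"
  shows "computable n (\<lambda>xs. code_drop (f xs) (g xs))"
proof (rule computable_lift2[OF _ assms])
  have "computable 2 (\<lambda>ys. rec_nat (ys ! 0) (\<lambda>k r. (\<lambda>zs. code_tl (zs ! 0)) (r # k # ys)) (ys ! 1))"
    unfolding code_tl_def
    by (rule computable_rec_nat) (auto intro!: computable_intros computable_unpair_snd)
  then show "computable 2 (\<lambda>ys. code_drop (ys ! 0) (ys ! 1))"
    by (rule computable_cong) (simp add: code_drop_def)
qed

lemma computable_code_nth:
  "computable n f \<Longrightarrow> computable n g \<Longrightarrow> computable n (\<lambda>xs. code_nth (f xs) (g xs))"
  unfolding code_nth_def code_hd_def
  by (auto intro!: computable_intros computable_unpair_fst computable_code_drop)

lemma computable_code_length: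
  assumes "computable n f" shows "computable n (\<lambda>xs. code_length (f xs))"
proof (rule computable_lift1[OF _ assms])
  have "computable (Suc 1) (\<lambda>zs. if code_drop (zs ! 1) (zs ! 0) = 0 then 0 else 1)"
    by (auto intro!: computable_intros computable_code_drop)
  from computable_sum_less[OF this computable_proj[of 0 1, OF zero_less_one]]
  show "computable 1 (\<lambda>ys. code_length (ys ! 0))"
    by (rule computable_cong) (simp add: code_length_def)
qed

lemma computable_code_append:
  assumes "computable n f" and "computable n g"
  shows "computable n (\<lambda>xs. code_append (f xs) (g xs))"
proof (rule computable_lift2[OF _ assms])
  have "computable 2 (\<lambda>ys. rec_nat (ys ! 1)
          (\<lambda>k r. (\<lambda>zs. code_Cons (code_nth (zs ! 2) (code_length (zs ! 2) - Suc (zs ! 1))) (zs ! 0))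
            (r # k # ys)) (code_length (ys ! 0)))"
    by (rule computable_rec_nat)
      (auto intro!: computable_intros computable_code_Cons computable_code_nth computable_code_length)
  then show "computable 2 (\<lambda>ys. code_append (ys ! 0) (ys ! 1))"
    by (rule computable_cong) (simp add: code_append_def)
qed

section \<open>Collisions of expanding automata can be taken short\<close>

fun run :: "automaton \<Rightarrow> nat \<Rightarrow> nat list \<Rightarrow> nat" where
  "run A p [] = p"
| "run A p (a # w) = run A (ttab A ! p ! a) w"

lemma run_append: "run A p (x @ y) = run A (run A p x) y"
  by (induction x arbitrary: p) auto

lemma state_map_append:
  "state_map A p (x @ y) = state_map A p x @ state_map A (run A p x) y"
  by (induction x arbitrary: p) auto

(* Runs stay among the states and, since outputs are nonempty, outputs are at least as long as inputs. *)
lemma run_in_states: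
  "expanding_automaton A \<Longrightarrow> p < nQ A \<Longrightarrow> set w \<subseteq> {..<nS A} \<Longrightarrow> run A p w < nQ A"
  by (induction w arbitrary: p) (auto simp: expanding_automaton_def)

lemma length_le_state_map:
  assumes "expanding_automaton A" and "p < nQ A" and "set w \<subseteq> {..<nS A}"
  shows "length w \<le> length (state_map A p w)"
  using assms(2,3)
proof (induction w arbitrary: p)
  case Nil then show ?case by simp
next
  case (Cons a w)
  then have "otab A ! p ! a \<noteq> []" and "ttab A ! p ! a < nQ A"
    using assms(1) by (auto simp: expanding_automaton_def)
  with Cons show ?case by (cases "otab A ! p ! a") force+
qed

definition collision :: "automaton \<Rightarrow> nat \<Rightarrow> nat list \<Rightarrow> nat list \<Rightarrow> bool" where
  "collision A q u v \<longleftrightarrow>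
     set u \<subseteq> {..<nS A} \<and> set v \<subseteq> {..<nS A} \<and> u \<noteq> v \<and> state_map A q u = state_map A q v"

lemma not_inj_on_iff_collision:
  "\<not> inj_on (state_map A q) (lists {..<nS A}) \<longleftrightarrow> (\<exists>u v. collision A q u v)"
  unfolding inj_on_def collision_def by auto

lemma collision_symmetric: "collision A q u v \<Longrightarrow> collision A q v u"
  unfolding collision_def by auto

(* A word has a different image than any proper extension, because outputs are nonempty. *)
lemma state_map_prefix_eq:
  assumes exp: "expanding_automaton A" and p: "p < nQ A" and v: "set v \<subseteq> {..<nS A}"
    and "prefix u v" and eq: "state_map A p u = state_map A p v"
  shows "u = v"
proof -
  obtain y where v_split: "v = u @ y" using \<open>prefix u v\<close> by (auto elim: prefixE)
  have u: "set u \<subseteq> {..<nS A}" and y: "set y \<subseteq> {..<nS A}" using v v_split by auto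
  have "state_map A (run A p u) y = []" using eq v_split by (simp add: state_map_append)
  then have "y = []" using length_le_state_map[OF exp run_in_states[OF exp p u] y] by simp
  then show ?thesis using v_split by simp
qed

lemma collision_first_difference:
  assumes exp: "expanding_automaton A" and p: "p < nQ A" and co: "collision A p u v"
  shows "\<exists>x a b u1 v1. u = x @ a # u1 \<and> v = x @ b # v1 \<and> a \<noteq> b"
proof -
  have "u \<parallel> v"
    using co state_map_prefix_eq[OF exp p, of v u] state_map_prefix_eq[OF exp p, of u v]
    unfolding collision_def by auto
  then show ?thesis using parallel_decomp by blast
qed

(* locate A p w k = (p', c, r): the k-th letter (counting from 1) of state_map A p w is the
   r-th letter of the output produced when the letter c is read in state p'. We call such a
   triple a configuration. *)
fun locate :: "automaton \<Rightarrow> nat \<Rightarrow> nat list \<Rightarrow> nat \<Rightarrow> nat \<times> nat \<times> nat" where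
  "locate A p [] k = (p, 0, k)"
| "locate A p (a # w) k =
     (if k \<le> length (otab A ! p ! a) then (p, a, k)
      else locate A (ttab A ! p ! a) w (k - length (otab A ! p ! a)))"

lemma locate_split:
  assumes "0 < k" and "k \<le> length (state_map A p w)"
  shows "\<exists>w1 c w2. w = w1 @ c # w2 \<and> length (state_map A p w1) < k \<and>
           k \<le> length (state_map A p w1) + length (otab A ! run A p w1 ! c) \<and>
           locate A p w k = (run A p w1, c, k - length (state_map A p w1))"
  using assms
proof (induction w arbitrary: p k)
  case Nil then show ?case by simp
next
  case (Cons a w)
  show ?case
  proof (cases "k \<le> length (otab A ! p ! a)")
    case True then show ?thesis using Cons.prems by (intro exI[of _ "[]"]) auto
  next
    case False
    define p' where "p' = ttab A ! p ! a"
    define k' where "k' = k - length (otab A ! p ! a)"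
    have "0 < k'" "k' \<le> length (state_map A p' w)"
      using False Cons.prems(2) unfolding p'_def k'_def by auto
    then obtain w1 c w2 where "w = w1 @ c # w2" "length (state_map A p' w1) < k'"
      "k' \<le> length (state_map A p' w1) + length (otab A ! run A p' w1 ! c)"
      "locate A p' w k' = (run A p' w1, c, k' - length (state_map A p' w1))"
      using Cons.IH by blast
    then show ?thesis using False unfolding p'_def k'_def by (intro exI[of _ "a # w1"]) auto
  qed
qed

definition bounded_by :: "automaton \<Rightarrow> nat \<Rightarrow> bool" where
  "bounded_by A N \<longleftrightarrow> nQ A \<le> N \<and> nS A \<le> N \<and> (\<forall>p<nQ A. \<forall>a<nS A. length (otab A ! p ! a) \<le> N)"

lemma locate_in_configurations:
  assumes exp: "expanding_automaton A" and p: "p < nQ A" and bd: "bounded_by A N"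
    and w: "set w \<subseteq> {..<nS A}" and k: "0 < k" "k \<le> length (state_map A p w)"
  shows "locate A p w k \<in> {..<nQ A} \<times> {..<nS A} \<times> {..N}"
proof -
  obtain w1 c w2 where split: "w = w1 @ c # w2"
    and bounds: "k \<le> length (state_map A p w1) + length (otab A ! run A p w1 ! c)"
    and loc: "locate A p w k = (run A p w1, c, k - length (state_map A p w1))"
    using locate_split[OF k] by blast
  have "run A p w1 < nQ A" using run_in_states[OF exp p] w split by auto
  moreover have "c < nS A" using w split by auto
  moreover have "length (otab A ! run A p w1 ! c) \<le> N"
    using bd calculation unfolding bounded_by_def by blast
  ultimately show ?thesis using loc bounds by auto
qed

(* The hypothesis on k1 ensures the first letter is kept. *)
lemma excise_between_equal_locations:
  assumes w: "set (a # w) \<subseteq> {..<nS A}" and first: "length (otab A ! p ! a) < k1"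
    and k12: "k1 < k2" and k2: "k2 \<le> length (state_map A p (a # w))"
    and eq: "locate A p (a # w) k1 = locate A p (a # w) k2"
  shows "\<exists>w'. set (a # w') \<subseteq> {..<nS A} \<and> length w' < length w \<and>
     state_map A p (a # w') = take k1 (state_map A p (a # w)) @ drop k2 (state_map A p (a # w))"
proof -
  let ?W = "state_map A p (a # w)"
  have k1_range: "0 < k1" "k1 \<le> length ?W" and k2_range: "0 < k2" "k2 \<le> length ?W"
    using first k12 k2 by linarith+
  obtain w1 c w2 where s1: "a # w = w1 @ c # w2"
    and l1: "length (state_map A p w1) < k1"
    and u1: "k1 \<le> length (state_map A p w1) + length (otab A ! run A p w1 ! c)"
    and c1: "locate A p (a # w) k1 = (run A p w1, c, k1 - length (state_map A p w1))"
    using locate_split[OF k1_range] by blast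
  obtain w1' c' w2' where s2: "a # w = w1' @ c' # w2'"
    and l2: "length (state_map A p w1') < k2"
    and c2: "locate A p (a # w) k2 = (run A p w1', c', k2 - length (state_map A p w1'))"
    using locate_split[OF k2_range] by blast
  define p' where "p' = run A p w1"
  define r where "r = k1 - length (state_map A p w1)"
  have same: "c' = c" "run A p w1' = p'" "k2 - length (state_map A p w1') = r"
    using eq c1 c2 unfolding p'_def r_def by auto
  have r: "0 < r" "r \<le> length (otab A ! p' ! c)" using l1 u1 unfolding p'_def r_def by auto
  have W1: "?W = state_map A p w1 @ otab A ! p' ! c @ state_map A (ttab A ! p' ! c) w2"
    unfolding s1 p'_def by (simp add: state_map_append)
  have W2: "?W = state_map A p w1' @ otab A ! p' ! c @ state_map A (ttab A ! p' ! c) w2'"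
    unfolding s2 by (simp add: state_map_append same)
  have take_W: "take k1 ?W = state_map A p w1 @ take r (otab A ! p' ! c)"
    using l1 r(2) unfolding W1 r_def by simp
  have drop_W: "drop k2 ?W = drop r (otab A ! p' ! c) @ state_map A (ttab A ! p' ! c) w2'"
    using l2 r(2) same(3) unfolding W2 by simp
  obtain w1t where w1t: "w1 = a # w1t"
  proof (cases w1)
    case Nil
    then show ?thesis using s1 u1 first by simp
  next
    case (Cons a' w1t)
    then show ?thesis using s1 that by simp
  qed
  have "length w1 < length w1'"
  proof (rule ccontr)
    assume "\<not> length w1 < length w1'"
    then have "take (length w1') w1 = w1'"
      using arg_cong[OF trans[OF s1[symmetric] s2], of "take (length w1')"] by simp
    then obtain z where "w1 = w1' @ z" by (metis append_take_drop_id)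
    then have "length (state_map A p w1') \<le> length (state_map A p w1)"
      by (simp add: state_map_append)
    then show False using same(3) l1 l2 k12 unfolding r_def by linarith
  qed
  then have shorter: "length (w1t @ c # w2') < length w"
    using arg_cong[OF s2, of length] w1t by simp
  have "set (a # w1t @ c # w2') \<subseteq> {..<nS A}"
    using w arg_cong[OF s1, of set] arg_cong[OF s2, of set] same(1) w1t by auto
  moreover have "state_map A p (a # w1t @ c # w2') =
      state_map A p w1 @ otab A ! p' ! c @ state_map A (ttab A ! p' ! c) w2'"
    using w1t by (simp add: state_map_append p'_def)
  then have "state_map A p (a # w1t @ c # w2') = take k1 ?W @ drop k2 ?W"
    unfolding take_W drop_W by (metis append.assoc append_take_drop_id)
  ultimately show ?thesis using shorter by blast
qed

lemma not_inj_on_less_pair: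
  assumes "\<not> inj_on f K"
  obtains k1 k2 :: nat where "k1 \<in> K" "k2 \<in> K" "k1 < k2" "f k1 = f k2"
proof -
  obtain i j where ij: "i \<in> K" "j \<in> K" "i \<noteq> j" "f i = f j"
    using assms unfolding inj_on_def by blast
  show ?thesis
  proof (cases "i < j")
    case True then show ?thesis using that ij by blast
  next
    case False then have "j < i" using ij(3) by simp
    then show ?thesis using that ij by metis
  qed
qed

lemma run_repeats:
  assumes exp: "expanding_automaton A" and q: "q < nQ A"
    and x: "set x \<subseteq> {..<nS A}" and long: "nQ A \<le> length x"
  shows "\<exists>x1 y x3. x = x1 @ y @ x3 \<and> y \<noteq> [] \<and> run A q (x1 @ y) = run A q x1"
proof -
  define f where "f j = run A q (take j x)" for j
  have "f j < nQ A" for j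
    unfolding f_def by (intro run_in_states[OF exp q] order.trans[OF set_take_subset x])
  then have "f ` {..nQ A} \<subseteq> {..<nQ A}" by auto
  then have "\<not> inj_on f {..nQ A}"
    using card_inj_on_le[of f "{..nQ A}" "{..<nQ A}"] by auto
  then obtain j1 j2 where j: "j1 < j2" "j2 \<le> nQ A" and same: "f j1 = f j2"
    by (rule not_inj_on_less_pair) auto
  define y where "y = drop j1 (take j2 x)"
  have prefix: "take j1 x @ y = take j2 x"
    unfolding y_def using j(1) by (metis append_take_drop_id less_imp_le_nat min.absorb1 take_take)
  have "x = take j1 x @ y @ drop j2 x" using prefix by (metis append.assoc append_take_drop_id)
  moreover have "y \<noteq> []" unfolding y_def using j long by simp
  moreover have "run A q (take j1 x @ y) = run A q (take j1 x)"
    using same prefix unfolding f_def by simp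
  ultimately show ?thesis by blast
qed

(* First shortening: if the common prefix of a collision is long, a loop in it can be removed
   from both words. *)
lemma shorten_collision_prefix:
  assumes exp: "expanding_automaton A" and q: "q < nQ A"
    and co: "collision A q (x @ a # u) (x @ b # v)" and long: "nQ A \<le> length x"
  shows "\<exists>x'. length x' < length x \<and> collision A q (x' @ a # u) (x' @ b # v)"
proof -
  have "set x \<subseteq> {..<nS A}" using co unfolding collision_def by auto
  then obtain x1 y x3 where x: "x = x1 @ y @ x3" and y: "y \<noteq> []"
    and loop: "run A q (x1 @ y) = run A q x1"
    using run_repeats[OF exp q _ long] by blast
  have skip: "state_map A q (x1 @ y @ w) =
      state_map A q x1 @ state_map A (run A q x1) y @ state_map A (run A q x1) w" for w
    using loop by (simp add: state_map_append run_append)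
  have "collision A q ((x1 @ x3) @ a # u) ((x1 @ x3) @ b # v)"
    using co skip[of "x3 @ a # u"] skip[of "x3 @ b # v"] unfolding x collision_def
    by (auto simp: state_map_append)
  moreover have "length (x1 @ x3) < length x" using x y by simp
  ultimately show ?thesis by blast
qed

(* Second shortening: after the first difference, if the common output is long, two of its
   positions beyond the first letters carry the same pair of configurations of the two runs,
   and the corresponding input segments can be excised from both words simultaneously. *)
lemma shorten_collision_tails:
  fixes N :: nat
  defines "F \<equiv> N * N * (N + 1)"
  assumes exp: "expanding_automaton A" and p: "p < nQ A" and bd: "bounded_by A N"
    and a: "set (a # u) \<subseteq> {..<nS A}" and b: "set (b # v) \<subseteq> {..<nS A}"
    and eq: "state_map A p (a # u) = state_map A p (b # v)"
    and long: "N + F * F < length (state_map A p (a # u))"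
  shows "\<exists>u' v'. length u' < length u \<and> length v' < length v \<and>
           set (a # u') \<subseteq> {..<nS A} \<and> set (b # v') \<subseteq> {..<nS A} \<and>
           state_map A p (a # u') = state_map A p (b # v')"
proof -
  define W where "W = state_map A p (a # u)"
  define C where "C = {..<nQ A} \<times> {..<nS A} \<times> {..N}"
  define K where "K = {Suc N..length W}"
  define g where "g k = (locate A p (a # u) k, locate A p (b # v) k)" for k
  have "card C = nQ A * (nS A * Suc N)" unfolding C_def by (simp add: card_cartesian_product)
  also have "\<dots> \<le> N * (N * Suc N)"
    using bd unfolding bounded_by_def by (intro mult_le_mono) auto
  also have "\<dots> = F" unfolding F_def by (simp add: algebra_simps)
  finally have "card (C \<times> C) \<le> F * F" by (simp add: card_cartesian_product mult_le_mono)
  moreover have "g ` K \<subseteq> C \<times> C"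
  proof
    fix y assume "y \<in> g ` K"
    then obtain k where k: "k \<in> K" and y: "y = g k" by blast
    then have pos: "0 < k" and in_a: "k \<le> length (state_map A p (a # u))"
      and in_b: "k \<le> length (state_map A p (b # v))"
      using eq unfolding K_def W_def by (simp_all del: state_map.simps)
    have "locate A p (a # u) k \<in> C" "locate A p (b # v) k \<in> C"
      using locate_in_configurations[OF exp p bd a pos in_a]
        locate_in_configurations[OF exp p bd b pos in_b] unfolding C_def by blast+
    then show "y \<in> C \<times> C" unfolding y g_def by blast
  qed
  moreover have "F * F < card K" using long unfolding K_def W_def by simp
  ultimately have "\<not> inj_on g K"
    using card_inj_on_le[of g K "C \<times> C"] unfolding C_def by fastforce
  then obtain k1 k2 where k: "k1 \<in> K" "k2 \<in> K" "k1 < k2" "g k1 = g k2"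
    by (rule not_inj_on_less_pair)
  have out_a: "length (otab A ! p ! a) < k1" and out_b: "length (otab A ! p ! b) < k1"
    using bd p a b k(1) unfolding bounded_by_def K_def by fastforce+
  have loc: "locate A p (a # u) k1 = locate A p (a # u) k2"
    "locate A p (b # v) k1 = locate A p (b # v) k2"
    using k(4) unfolding g_def prod.inject by blast+
  have W_b: "W = state_map A p (b # v)" using eq unfolding W_def .
  have k2_a: "k2 \<le> length (state_map A p (a # u))" and k2_b: "k2 \<le> length (state_map A p (b # v))"
    using k(2) unfolding K_def W_def[symmetric] W_b[symmetric] by simp_all
  obtain u' where "length u' < length u" "set (a # u') \<subseteq> {..<nS A}"
    "state_map A p (a # u') = take k1 W @ drop k2 W"
    using excise_between_equal_locations[OF a out_a k(3) k2_a loc(1)] unfolding W_def by blast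
  moreover obtain v' where "length v' < length v" "set (b # v') \<subseteq> {..<nS A}"
    "state_map A p (b # v') = take k1 W @ drop k2 W"
    using excise_between_equal_locations[OF b out_b k(3) k2_b loc(2)] unfolding W_b by blast
  ultimately show ?thesis by metis
qed

(* Beyond this length one of the two shortenings applies. *)
definition collision_bound :: "nat \<Rightarrow> nat" where
  "collision_bound N = 2 * N + (N * N * (N + 1)) * (N * N * (N + 1))"

lemma shorter_collision:
  assumes exp: "expanding_automaton A" and q: "q < nQ A" and bd: "bounded_by A N"
    and co: "collision A q u v" and long: "collision_bound N < length u"
  shows "\<exists>u' v'. collision A q u' v' \<and> length u' + length v' < length u + length v"
proof -
  obtain x a b u1 v1 where u: "u = x @ a # u1" and v: "v = x @ b # v1" and ab: "a \<noteq> b"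
    using collision_first_difference[OF exp q co] by blast
  show ?thesis
  proof (cases "nQ A \<le> length x")
    case True
    then obtain x' where "length x' < length x" "collision A q (x' @ a # u1) (x' @ b # v1)"
      using shorten_collision_prefix[OF exp q] co unfolding u v by blast
    then show ?thesis unfolding u v by (intro exI[of _ "x' @ a # u1"] exI[of _ "x' @ b # v1"]) auto
  next
    case False
    define p where "p = run A q x"
    have x: "set x \<subseteq> {..<nS A}" and a: "set (a # u1) \<subseteq> {..<nS A}"
      and b: "set (b # v1) \<subseteq> {..<nS A}"
      using co unfolding u v collision_def by auto
    have p_state: "p < nQ A" unfolding p_def using run_in_states[OF exp q x] .
    have eq: "state_map A p (a # u1) = state_map A p (b # v1)"
      using co unfolding u v collision_def p_def by (simp add: state_map_append)
    have "N + N * N * (N + 1) * (N * N * (N + 1)) < length (state_map A p (a # u1))"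
      using long False bd length_le_state_map[OF exp p_state a]
      unfolding u collision_bound_def bounded_by_def by simp
    then obtain u' v' where "length u' < length u1" "length v' < length v1"
      "set (a # u') \<subseteq> {..<nS A}" "set (b # v') \<subseteq> {..<nS A}"
      "state_map A p (a # u') = state_map A p (b # v')"
      using shorten_collision_tails[OF exp p_state bd a b eq] by blast
    then have "collision A q (x @ a # u') (x @ b # v')"
      using x ab unfolding collision_def p_def by (auto simp: state_map_append)
    then show ?thesis using \<open>length u' < length u1\<close> \<open>length v' < length v1\<close>
      unfolding u v by (intro exI[of _ "x @ a # u'"] exI[of _ "x @ b # v'"]) auto
  qed
qed

lemma short_collision_exists:
  assumes exp: "expanding_automaton A" and q: "q < nQ A" and bd: "bounded_by A N"
  shows "collision A q u v \<Longrightarrow> \<exists>u' v'. collision A q u' v' \<and>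
           length u' \<le> collision_bound N \<and> length v' \<le> collision_bound N"
proof (induction "length u + length v" arbitrary: u v rule: less_induct)
  case less
  show ?case
  proof (cases "length u \<le> collision_bound N \<and> length v \<le> collision_bound N")
    case True
    then show ?thesis using less.prems by blast
  next
    case False
    have "\<exists>u' v'. collision A q u' v' \<and> length u' + length v' < length u + length v"
    proof (cases "collision_bound N < length u")
      case True
      then show ?thesis using shorter_collision[OF exp q bd less.prems] by blast
    next
      case False
      then have "collision_bound N < length v"
        using \<open>\<not> (length u \<le> collision_bound N \<and> length v \<le> collision_bound N)\<close> by simp
      then obtain v' u' where "collision A q v' u'" "length v' + length u' < length v + length u"
        using shorter_collision[OF exp q bd collision_symmetric[OF less.prems]] by blast
      then show ?thesis using collision_symmetric by (metis add.commute)
    qed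
    then show ?thesis using less.hyps by blast
  qed
qed

section \<open>A decision procedure on codes of automata\<close>

(* Coded simulation of an automaton: code_entry reads an entry of a coded table, code_run
   computes the state after reading the first j letters of a coded word, code_state_map the
   coded image of a coded word (built back to front by appending outputs). *)
definition code_entry :: "nat \<Rightarrow> nat \<Rightarrow> nat \<Rightarrow> nat" where
  "code_entry M i j = code_nth (code_nth M i) j"

definition code_run :: "nat \<Rightarrow> nat \<Rightarrow> nat \<Rightarrow> nat \<Rightarrow> nat" where
  "code_run T q w j = rec_nat q (\<lambda>k r. code_entry T r (code_nth w k)) j"

definition code_state_map :: "nat \<Rightarrow> nat \<Rightarrow> nat \<Rightarrow> nat \<Rightarrow> nat" where
  "code_state_map T Out q w =
     rec_nat 0 (\<lambda>k r. code_append
        (code_entry Out (code_run T q w (code_length w - Suc k)) (code_nth w (code_length w - Suc k))) r)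
      (code_length w)"

definition code_word_over :: "nat \<Rightarrow> nat \<Rightarrow> bool" where
  "code_word_over S w \<longleftrightarrow> (\<forall>i<code_length w. code_nth w i < S)"

(* The code of [N, ..., N] of length L bounds the codes of all words of length at most L over {..N}. *)
definition code_bound :: "nat \<Rightarrow> nat \<Rightarrow> nat" where
  "code_bound N L = list_encode (replicate L N)"

(* On the code I of an instance (fields 1-4: alphabet size, transition table, output table,
   state), decide_injective searches all pairs of words with codes up to the bound given by
   short_collision_exists for a collision. *)
definition code_collision :: "nat \<Rightarrow> nat \<Rightarrow> nat \<Rightarrow> bool" where
  "code_collision I c1 c2 \<longleftrightarrow> c1 \<noteq> c2 \<and>
     code_word_over (code_nth I 1) c1 \<and> code_word_over (code_nth I 1) c2 \<and>
     code_state_map (code_nth I 2) (code_nth I 3) (code_nth I 4) c1 =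
     code_state_map (code_nth I 2) (code_nth I 3) (code_nth I 4) c2"

definition decide_injective :: "nat \<Rightarrow> nat" where
  "decide_injective I =
     (if \<exists>c1<Suc (code_bound I (collision_bound I)). \<exists>c2<Suc (code_bound I (collision_bound I)).
           code_collision I c1 c2
      then 0 else 1)"

lemma computable_code_entry:
  "computable n f \<Longrightarrow> computable n g \<Longrightarrow> computable n h \<Longrightarrow>
   computable n (\<lambda>xs. code_entry (f xs) (g xs) (h xs))"
  unfolding code_entry_def by (intro computable_code_nth)

lemma computable_code_run:
  assumes "computable n f" "computable n g" "computable n h" "computable n i"
  shows "computable n (\<lambda>xs. code_run (f xs) (g xs) (h xs) (i xs))"
proof (rule computable_lift4[OF _ assms])
  have "computable 4 (\<lambda>ys. rec_nat (ys ! 1)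
          (\<lambda>k r. (\<lambda>zs. code_entry (zs ! 2) (zs ! 0) (code_nth (zs ! 4) (zs ! 1))) (r # k # ys)) (ys ! 3))"
    by (rule computable_rec_nat) (auto intro!: computable_intros computable_code_entry computable_code_nth)
  then show "computable 4 (\<lambda>ys. code_run (ys ! 0) (ys ! 1) (ys ! 2) (ys ! 3))"
    by (rule computable_cong) (simp add: code_run_def)
qed

lemma computable_code_state_map:
  assumes "computable n f" "computable n g" "computable n h" "computable n i"
  shows "computable n (\<lambda>xs. code_state_map (f xs) (g xs) (h xs) (i xs))"
proof (rule computable_lift4[OF _ assms])
  have "computable 4 (\<lambda>ys. rec_nat 0
          (\<lambda>k r. (\<lambda>zs. code_append (code_entry (zs ! 3)
              (code_run (zs ! 2) (zs ! 4) (zs ! 5) (code_length (zs ! 5) - Suc (zs ! 1)))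
              (code_nth (zs ! 5) (code_length (zs ! 5) - Suc (zs ! 1)))) (zs ! 0)) (r # k # ys))
          (code_length (ys ! 3)))"
    by (rule computable_rec_nat)
      (auto intro!: computable_intros computable_code_entry computable_code_run computable_code_nth
        computable_code_length computable_code_append)
  then show "computable 4 (\<lambda>ys. code_state_map (ys ! 0) (ys ! 1) (ys ! 2) (ys ! 3))"
    by (rule computable_cong) (simp add: code_state_map_def)
qed

lemma decidable_code_word_over:
  assumes f: "computable n f" and g: "computable n g"
  shows "decidable n (\<lambda>xs. code_word_over (f xs) (g xs))"
proof -
  have "decidable 2 (\<lambda>ys. \<exists>i<code_length (ys ! 1). (\<lambda>zs. \<not> code_nth (zs ! 2) (zs ! 0) < zs ! 1) (i # ys))"
    by (rule decidable_bounded_ex) (auto intro!: computable_intros computable_code_nth computable_code_length)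
  then have "computable 2 (\<lambda>ys. (\<lambda>S w. if code_word_over S w then 1 else 0) (ys ! 0) (ys ! 1))"
    unfolding decidable_def by (rule decidable_not[unfolded decidable_def, THEN computable_cong])
      (auto simp: code_word_over_def)
  then show ?thesis unfolding decidable_def using f g by (rule computable_lift2)
qed

lemma computable_code_bound:
  assumes "computable n f" and "computable n g"
  shows "computable n (\<lambda>xs. code_bound (f xs) (g xs))"
proof (rule computable_lift2[OF _ assms])
  have "computable 2 (\<lambda>ys. rec_nat 0 (\<lambda>k r. (\<lambda>zs. code_Cons (zs ! 2) (zs ! 0)) (r # k # ys)) (ys ! 1))"
    by (rule computable_rec_nat) (auto intro!: computable_intros computable_code_Cons)
  moreover have "rec_nat 0 (\<lambda>k r. code_Cons N r) L = code_bound N L" for N L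
    by (induction L) (simp_all add: code_bound_def code_Cons_list_encode)
  ultimately show "computable 2 (\<lambda>ys. code_bound (ys ! 0) (ys ! 1))"
    by simp
qed

lemma computable_decide_injective: "computable 1 (\<lambda>xs. decide_injective (xs ! 0))"
proof -
  have pair: "decidable (Suc (Suc (Suc 0))) (\<lambda>zs. code_collision (zs ! 2) (zs ! 1) (zs ! 0))"
    unfolding code_collision_def
    by (intro decidable_conj decidable_not decidable_eq decidable_code_word_over
        computable_code_state_map computable_code_nth computable_proj computable_const) auto
  have inner: "decidable (Suc (Suc 0)) (\<lambda>ys. \<exists>i<Suc (code_bound (ys ! 1) (collision_bound (ys ! 1))).
      (\<lambda>zs. code_collision (zs ! 2) (zs ! 1) (zs ! 0)) (i # ys))"
    by (rule decidable_bounded_ex[OF pair])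
      (auto intro!: computable_intros computable_code_bound simp: collision_bound_def)
  have outer: "decidable (Suc 0) (\<lambda>xs. \<exists>i<Suc (code_bound (xs ! 0) (collision_bound (xs ! 0))).
      (\<lambda>ys. \<exists>i<Suc (code_bound (ys ! 1) (collision_bound (ys ! 1))).
        (\<lambda>zs. code_collision (zs ! 2) (zs ! 1) (zs ! 0)) (i # ys)) (i # xs))"
    by (rule decidable_bounded_ex[OF inner])
      (auto intro!: computable_intros computable_code_bound simp: collision_bound_def)
  have "computable (Suc 0) (\<lambda>xs. decide_injective (xs ! 0))"
    using computable_if[OF outer computable_const computable_const, of 0 1]
    by (rule computable_cong) (simp add: decide_injective_def)
  then show ?thesis by simp
qed

definition ttab_code :: "automaton \<Rightarrow> nat" where
  "ttab_code A = list_encode (map list_encode (ttab A))"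

definition otab_code :: "automaton \<Rightarrow> nat" where
  "otab_code A = list_encode (map (\<lambda>row. list_encode (map list_encode row)) (otab A))"

lemma encode_instance_eq:
  "encode_instance A q = list_encode [nQ A, nS A, ttab_code A, otab_code A, q]"
  unfolding encode_instance_def ttab_code_def otab_code_def by simp

lemma code_entry_list_encode:
  assumes "i < length xss" and "j < length (xss ! i)"
  shows "code_entry (list_encode (map list_encode xss)) i j = xss ! i ! j"
  using assms by (simp add: code_entry_def code_nth_list_encode)

lemma list_encode_le_of_mem: "x \<in> set xs \<Longrightarrow> x \<le> list_encode xs"
proof (induction xs)
  case Nil then show ?case by simp
next
  case (Cons a xs)
  then show ?case
    using le_prod_encode_1[of a "list_encode xs"] le_prod_encode_2[of "list_encode xs" a] by auto
qed

lemma prod_encode_mono: "a \<le> a' \<Longrightarrow> b \<le> b' \<Longrightarrow> prod_encode (a, b) \<le> prod_encode (a', b')"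
  unfolding prod_encode_def using triangle_mono[of "a + b" "a' + b'"] by simp

lemma list_encode_le_code_bound:
  "set ws \<subseteq> {..N} \<Longrightarrow> length ws \<le> L \<Longrightarrow> list_encode ws \<le> code_bound N L"
proof (induction ws arbitrary: L)
  case Nil then show ?case by simp
next
  case (Cons x ws)
  then obtain L' where L: "L = Suc L'" by (cases L) auto
  have "list_encode ws \<le> code_bound N L'" using Cons L by simp
  then show ?case using Cons.prems L prod_encode_mono by (simp add: code_bound_def)
qed

lemma code_word_over_correct: "code_word_over S (list_encode ws) \<longleftrightarrow> set ws \<subseteq> {..<S}"
  unfolding code_word_over_def code_length_list_encode
  by (auto simp: code_nth_list_encode in_set_conv_nth subset_iff)

context
  fixes A :: automaton and q :: nat
  assumes exp: "expanding_automaton A" and q: "q < nQ A"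
begin

lemma table_lengths:
  "length (ttab A) = nQ A" "length (otab A) = nQ A"
  "p < nQ A \<Longrightarrow> length (ttab A ! p) = nS A" "p < nQ A \<Longrightarrow> length (otab A ! p) = nS A"
  using exp by (auto simp: expanding_automaton_def)

lemma code_entry_ttab_code:
  "p < nQ A \<Longrightarrow> a < nS A \<Longrightarrow> code_entry (ttab_code A) p a = ttab A ! p ! a"
  unfolding ttab_code_def by (rule code_entry_list_encode) (simp_all add: table_lengths)

lemma code_entry_otab_code:
  "p < nQ A \<Longrightarrow> a < nS A \<Longrightarrow> code_entry (otab_code A) p a = list_encode (otab A ! p ! a)"
  unfolding otab_code_def using code_entry_list_encode[of p "map (map list_encode) (otab A)" a]
  by (simp add: table_lengths comp_def)

lemma code_run_correct:
  assumes ws: "set ws \<subseteq> {..<nS A}"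
  shows "j \<le> length ws \<Longrightarrow> code_run (ttab_code A) q (list_encode ws) j = run A q (take j ws)"
proof (induction j)
  case 0 then show ?case by (simp add: code_run_def)
next
  case (Suc j)
  have j: "j < length ws" using Suc by simp
  have r: "run A q (take j ws) < nQ A"
    using run_in_states[OF exp q] ws set_take_subset by (meson order.trans)
  have a: "ws ! j < nS A" using ws j nth_mem by blast
  have "code_run (ttab_code A) q (list_encode ws) (Suc j) =
      code_entry (ttab_code A) (code_run (ttab_code A) q (list_encode ws) j) (code_nth (list_encode ws) j)"
    by (simp add: code_run_def)
  also have "\<dots> = ttab A ! run A q (take j ws) ! (ws ! j)"
    using Suc j r a by (simp add: code_nth_list_encode code_entry_ttab_code)
  also have "\<dots> = run A q (take (Suc j) ws)"
    using j by (simp add: take_Suc_conv_app_nth run_append)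
  finally show ?case .
qed

lemma code_state_map_correct:
  assumes ws: "set ws \<subseteq> {..<nS A}"
  shows "code_state_map (ttab_code A) (otab_code A) q (list_encode ws) = list_encode (state_map A q ws)"
proof -
  let ?n = "length ws"
  let ?R = "\<lambda>k. rec_nat 0 (\<lambda>k r. code_append (code_entry (otab_code A)
              (code_run (ttab_code A) q (list_encode ws) (?n - Suc k))
              (code_nth (list_encode ws) (?n - Suc k))) r) k"
  have "?R k = list_encode (state_map A (run A q (take (?n - k) ws)) (drop (?n - k) ws))"
    if "k \<le> ?n" for k
    using that
  proof (induction k)
    case 0 then show ?case by simp
  next
    case (Suc k)
    define j where "j = ?n - Suc k"
    have j: "j < ?n" "Suc j = ?n - k" using Suc.prems unfolding j_def by auto
    have r: "run A q (take j ws) < nQ A"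
      using run_in_states[OF exp q] ws set_take_subset by (meson order.trans)
    have a: "ws ! j < nS A" using ws j nth_mem by blast
    have drop_j: "drop j ws = ws ! j # drop (?n - k) ws"
      using Cons_nth_drop_Suc[OF j(1), symmetric] j(2) by simp
    have run_j: "run A q (take (?n - k) ws) = ttab A ! run A q (take j ws) ! (ws ! j)"
      using j by (metis take_Suc_conv_app_nth run_append run.simps)
    have "?R (Suc k) = code_append (code_entry (otab_code A) (run A q (take j ws)) (ws ! j)) (?R k)"
      using j by (simp add: j_def[symmetric] code_run_correct[OF ws] code_nth_list_encode)
    also have "\<dots> = list_encode (otab A ! run A q (take j ws) ! (ws ! j) @
        state_map A (run A q (take (?n - k) ws)) (drop (?n - k) ws))"
      using Suc r a by (simp add: code_entry_otab_code code_append_list_encode)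
    also have "\<dots> = list_encode (state_map A (run A q (take j ws)) (drop j ws))"
      using drop_j run_j by simp
    finally show ?case unfolding j_def .
  qed
  from this[of ?n] show ?thesis unfolding code_state_map_def code_length_list_encode by simp
qed

lemma instance_fields:
  defines "I \<equiv> encode_instance A q"
  shows "code_nth I 1 = nS A" "code_nth I 2 = ttab_code A" "code_nth I 3 = otab_code A"
    "code_nth I 4 = q"
  unfolding I_def encode_instance_eq by (subst code_nth_list_encode, simp, simp)+

lemma bounded_by_encoding: "bounded_by A (encode_instance A q)"
  unfolding bounded_by_def
proof (intro conjI allI impI)
  show "nQ A \<le> encode_instance A q" "nS A \<le> encode_instance A q"
    unfolding encode_instance_eq by (rule list_encode_le_of_mem, simp)+
  fix p a assume p: "p < nQ A" and a: "a < nS A"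
  have "length (otab A ! p ! a) \<le> list_encode (otab A ! p ! a)" by (rule length_le_list_encode)
  also have "\<dots> \<le> list_encode (map list_encode (otab A ! p))"
    by (rule list_encode_le_of_mem) (use a p table_lengths in auto)
  also have "\<dots> \<le> otab_code A" unfolding otab_code_def
    by (rule list_encode_le_of_mem) (use p table_lengths in \<open>auto intro!: image_eqI[where x="otab A ! p"]\<close>)
  also have "\<dots> \<le> encode_instance A q" unfolding encode_instance_eq by (rule list_encode_le_of_mem) simp
  finally show "length (otab A ! p ! a) \<le> encode_instance A q" .
qed

lemma code_collision_correct:
  "code_collision (encode_instance A q) (list_encode u) (list_encode v) \<longleftrightarrow> collision A q u v"
  unfolding code_collision_def collision_def instance_fields code_word_over_correct
  by (auto simp: code_state_map_correct list_encode_eq)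

(* The decision procedure is correct: a collision exists iff a short one exists, and all
   short ones are searched. *)
lemma decide_injective_correct:
  "decide_injective (encode_instance A q) = (if inj_on (state_map A q) (lists {..<nS A}) then 1 else 0)"
proof -
  define I where "I = encode_instance A q"
  define B where "B = Suc (code_bound I (collision_bound I))"
  have "(\<exists>c1<B. \<exists>c2<B. code_collision I c1 c2) \<longleftrightarrow> (\<exists>u v. collision A q u v)"
  proof
    assume "\<exists>c1<B. \<exists>c2<B. code_collision I c1 c2"
    then obtain c1 c2 where "code_collision I (list_encode (list_decode c1)) (list_encode (list_decode c2))"
      by auto
    then show "\<exists>u v. collision A q u v" using code_collision_correct unfolding I_def by blast
  next
    assume "\<exists>u v. collision A q u v"
    then obtain u v where "collision A q u v" by blast
    then obtain u' v' where co: "collision A q u' v'"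
      and short: "length u' \<le> collision_bound I" "length v' \<le> collision_bound I"
      using short_collision_exists[OF exp q bounded_by_encoding] unfolding I_def by blast
    have "nS A \<le> I" using bounded_by_encoding unfolding bounded_by_def I_def by blast
    then have "set u' \<subseteq> {..I}" "set v' \<subseteq> {..I}" using co unfolding collision_def by auto
    then have "list_encode u' < B" "list_encode v' < B"
      using list_encode_le_code_bound short unfolding B_def by (auto simp: le_imp_less_Suc)
    moreover have "code_collision I (list_encode u') (list_encode v')"
      using co code_collision_correct unfolding I_def by blast
    ultimately show "\<exists>c1<B. \<exists>c2<B. code_collision I c1 c2" by blast
  qed
  then show ?thesis
    unfolding decide_injective_def B_def I_def not_inj_on_iff_collision[symmetric] by auto
qed

end

theorem mainTheorem7:
  shows "\<exists>p :: recf. \<forall>A q. expanding_automaton A \<longrightarrow> q < nQ A \<longrightarrow>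
           eval p [encode_instance A q]
             (if inj_on (state_map A q) (lists {..<nS A}) then 1 else 0)"
proof -
  obtain p where p: "computes 1 p (\<lambda>xs. decide_injective (xs ! 0))"
    using computable_decide_injective unfolding computable_def by blast
  have "eval p [encode_instance A q] (if inj_on (state_map A q) (lists {..<nS A}) then 1 else 0)"
    if "expanding_automaton A" and "q < nQ A" for A q
    using p[unfolded computes_def, rule_format, of "[encode_instance A q]"]
      decide_injective_correct[OF that] by simp
  then show ?thesis by blast
qed

end
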